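(* Let $\gamma\colon I\to\mathbb R^3$ be a curve parametrized by arc-length whose curvature is a nonzero constant $\kappa_0$, and suppose there exist $a_0,a_1\in\mathbb R$ with $a_1>0$ such that $|\gamma(s)|^2=(s+a_0)^2+a_1^2$ for all $s\in I$. Then there exists $q\in\mathbb R$, $q\neq0$, such that $\gamma''=q\,\gamma\times\gamma'$, i.e. $\gamma$ is a conformal trajectory of the radial vector field $V(x,y,z)=x\partial_x+y\partial_y+z\partial_z$.
   Context: $\times$ denotes the usual cross product of $\mathbb R^3$ and $|\cdot|$ the Euclidean norm. For a fixed real $q\neq0$, a conformal trajectory of a conformal vector field $V$ on $\mathbb R^3$ is a regular curve with $\gamma''=q\,V(\gamma)\times\gamma'$. *)

theory Defs
  imports "HOL-Analysis.Analysis"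
begin

definition vder :: "(real \<Rightarrow> real^3) \<Rightarrow> (real \<Rightarrow> real^3)" where
  "vder f = (\<lambda>t. vector_derivative f (at t))"

definition smooth_curve_on :: "real set \<Rightarrow> (real \<Rightarrow> real^3) \<Rightarrow> bool" where
  "smooth_curve_on I \<gamma> \<longleftrightarrow> (\<forall>n. \<forall>s\<in>I. (vder ^^ n) \<gamma> differentiable (at s))"

definition arclength_param :: "real set \<Rightarrow> (real \<Rightarrow> real^3) \<Rightarrow> bool" where
  "arclength_param I \<gamma> \<longleftrightarrow> (\<forall>s\<in>I. norm (vder \<gamma> s) = 1)"

definition curvature :: "(real \<Rightarrow> real^3) \<Rightarrow> real \<Rightarrow> real" where
  "curvature \<gamma> s = norm (cross3 (vder \<gamma> s) (vder (vder \<gamma>) s)) / norm (vder \<gamma> s) ^ 3"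

end

theory Submission
  imports Defs
begin

text \<open>
  Write \<open>T = \<gamma>'\<close>. Differentiating \<open>|\<gamma>|\<^sup>2 = (s + a\<^sub>0)\<^sup>2 + a\<^sub>1\<^sup>2\<close> gives \<open>\<gamma> \<bullet> T = s + a\<^sub>0\<close>, and
  differentiating once more, using \<open>|T| = 1\<close>, gives \<open>\<gamma> \<bullet> T' = 0\<close>. Since also \<open>T \<bullet> T' = 0\<close>,
  the acceleration \<open>T'\<close> is a multiple \<open>c(s)\<close> of \<open>\<gamma> \<times> T\<close>, a vector of constant length \<open>a\<^sub>1\<close>
  by Lagrange's identity. Comparing lengths, \<open>|c| = \<kappa>\<^sub>0 / a\<^sub>1\<close>; as \<open>c\<close> is continuous on the
  interval \<open>I\<close> it cannot change sign, so it is the required constant \<open>q\<close>.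
\<close>

lemma has_vector_derivative_inner:
  fixes f g :: "real \<Rightarrow> 'a::real_inner"
  assumes "(f has_vector_derivative f') (at x)" "(g has_vector_derivative g') (at x)"
  shows "((\<lambda>x. f x \<bullet> g x) has_real_derivative (f x \<bullet> g' + f' \<bullet> g x)) (at x)"
  using has_derivative_inner[OF assms[unfolded has_vector_derivative_def]]
  unfolding has_field_derivative_def
  by (rule has_derivative_eq_rhs) (auto simp: algebra_simps)

lemma has_real_derivative_unique_on_open:
  assumes "(f has_real_derivative a) (at x)" "(g has_real_derivative b) (at x)"
    and "open I" "x \<in> I" "\<And>z. z \<in> I \<Longrightarrow> f z = g z"
  shows "a = b"
  using has_field_derivative_transform_within_open[OF assms(1,3,4)] assms(2,5) DERIV_unique
  by metis

lemma inner_derivative_eq_on_open: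
  fixes f g :: "real \<Rightarrow> 'a::real_inner"
  assumes "(f has_vector_derivative f') (at x)" "(g has_vector_derivative g') (at x)"
    and "(h has_real_derivative h') (at x)"
    and "open I" "x \<in> I" "\<And>z. z \<in> I \<Longrightarrow> f z \<bullet> g z = h z"
  shows "f x \<bullet> g' + f' \<bullet> g x = h'"
  using has_real_derivative_unique_on_open[OF has_vector_derivative_inner[OF assms(1,2)] assms(3-6)] .

lemma cross3_cross3_left: "cross3 (cross3 a b) c = (a \<bullet> c) *\<^sub>R b - (b \<bullet> c) *\<^sub>R a"
  by (simp add: cross3_simps forall_3)

lemma cross3_cross3_right: "cross3 a (cross3 b c) = (a \<bullet> c) *\<^sub>R b - (a \<bullet> b) *\<^sub>R c"
  by (simp add: cross3_simps forall_3)

lemma orthogonal_imp_parallel_cross3: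
  fixes a b v :: "real^3"
  assumes "v \<bullet> a = 0" "v \<bullet> b = 0" "cross3 a b \<noteq> 0"
  shows "v = ((v \<bullet> cross3 a b) / (norm (cross3 a b))\<^sup>2) *\<^sub>R cross3 a b"
proof -
  have "cross3 (cross3 a b) v = 0"
    using assms by (simp add: cross3_cross3_left inner_commute)
  then have "cross3 (cross3 a b) (cross3 (cross3 a b) v) = 0"
    by simp
  then have parallel: "(v \<bullet> cross3 a b) *\<^sub>R cross3 a b = (norm (cross3 a b))\<^sup>2 *\<^sub>R v"
    by (simp add: cross3_cross3_right power2_norm_eq_inner inner_commute)
  have "v = inverse ((norm (cross3 a b))\<^sup>2) *\<^sub>R ((norm (cross3 a b))\<^sup>2 *\<^sub>R v)"
    using assms(3) by simp
  also have "\<dots> = ((v \<bullet> cross3 a b) / (norm (cross3 a b))\<^sup>2) *\<^sub>R cross3 a b"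
    by (simp only: parallel[symmetric] scaleR_scaleR divide_inverse_commute)
  finally show ?thesis .
qed

text \<open>The factor has constant absolute value, hence finite range, so it is constant on \<open>S\<close>.\<close>
lemma continuous_parallel_constant_factor:
  fixes v w :: "'a::topological_space \<Rightarrow> 'b::real_inner"
  assumes "connected S" "S \<noteq> {}" "continuous_on S v" "continuous_on S w" "a > 0"
    and "\<And>s. s \<in> S \<Longrightarrow> norm (w s) = a" "\<And>s. s \<in> S \<Longrightarrow> norm (v s) = b"
    and "\<And>s. s \<in> S \<Longrightarrow> v s = ((v s \<bullet> w s) / a\<^sup>2) *\<^sub>R w s"
  shows "\<exists>q. \<bar>q\<bar> = b / a \<and> (\<forall>s\<in>S. v s = q *\<^sub>R w s)"
proof -
  define c where "c s = (v s \<bullet> w s) / a\<^sup>2" for s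
  have v_eq: "v s = c s *\<^sub>R w s" if "s \<in> S" for s
    using assms(8)[OF that] by (simp add: c_def)
  have abs_c: "\<bar>c s\<bar> = b / a" if "s \<in> S" for s
  proof -
    have "b = \<bar>c s\<bar> * a"
      using v_eq[OF that] assms(6,7)[OF that] by simp
    then show ?thesis
      using \<open>a > 0\<close> by simp
  qed
  have "continuous_on S c"
    unfolding c_def using assms(3-5) by (auto intro!: continuous_intros)
  moreover have "finite (c ` S)"
    by (rule finite_subset[of _ "{b / a, - (b / a)}"]) (auto dest: abs_c)
  ultimately have "c constant_on S"
    using continuous_finite_range_constant[OF \<open>connected S\<close>] by blast
  then obtain q where q: "\<And>s. s \<in> S \<Longrightarrow> c s = q"
    by (auto simp: constant_on_def)
  obtain s0 where "s0 \<in> S"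
    using \<open>S \<noteq> {}\<close> by blast
  show ?thesis
  proof (intro exI conjI ballI)
    show "\<bar>q\<bar> = b / a"
      using abs_c[OF \<open>s0 \<in> S\<close>] q[OF \<open>s0 \<in> S\<close>] by simp
    show "v s = q *\<^sub>R w s" if "s \<in> S" for s
      using v_eq[OF that] q[OF that] by simp
  qed
qed

lemma smooth_curve_on_has_vector_derivative:
  assumes "smooth_curve_on I \<gamma>" "s \<in> I"
  shows "((vder ^^ n) \<gamma> has_vector_derivative (vder ^^ Suc n) \<gamma> s) (at s)"
proof -
  have "(vder ^^ n) \<gamma> differentiable (at s)"
    using assms unfolding smooth_curve_on_def by blast
  then show ?thesis
    by (metis vector_derivative_works vder_def funpow.simps(2) comp_apply)
qed

lemma smooth_curve_on_continuous_on:
  assumes "smooth_curve_on I \<gamma>"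
  shows "continuous_on I ((vder ^^ n) \<gamma>)"
  using assms unfolding smooth_curve_on_def
  by (auto intro!: continuous_at_imp_continuous_on differentiable_imp_continuous_within)

lemma arclength_param_velocity_orthogonal_acceleration:
  assumes "open I" "smooth_curve_on I \<gamma>" "arclength_param I \<gamma>" "s \<in> I"
  shows "vder \<gamma> s \<bullet> vder (vder \<gamma>) s = 0"
proof -
  have "vder \<gamma> s \<bullet> vder (vder \<gamma>) s + vder (vder \<gamma>) s \<bullet> vder \<gamma> s = 0"
    using smooth_curve_on_has_vector_derivative[OF assms(2,4), of 1]
    by (intro inner_derivative_eq_on_open[where h = "\<lambda>_. 1", OF _ _ _ assms(1,4)])
      (use assms(3) in \<open>auto simp: arclength_param_def norm_eq_1\<close>)
  then show ?thesis
    by (simp add: inner_commute)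
qed

lemma arclength_param_curvature:
  assumes "open I" "smooth_curve_on I \<gamma>" "arclength_param I \<gamma>" "s \<in> I"
  shows "curvature \<gamma> s = norm (vder (vder \<gamma>) s)"
proof -
  have "(norm (cross3 (vder \<gamma> s) (vder (vder \<gamma>) s)))\<^sup>2 = (norm (vder (vder \<gamma>) s))\<^sup>2"
    using norm_cross_dot[of "vder \<gamma> s" "vder (vder \<gamma>) s"] assms(3,4)
      arclength_param_velocity_orthogonal_acceleration[OF assms]
    by (simp add: arclength_param_def)
  then show ?thesis
    using assms(3,4) by (simp add: curvature_def arclength_param_def)
qed

lemma position_inner_velocity:
  assumes "open I" "smooth_curve_on I \<gamma>" "s \<in> I"
    and "\<And>s. s \<in> I \<Longrightarrow> norm (\<gamma> s) ^ 2 = (s + a0) ^ 2 + a1 ^ 2"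
  shows "\<gamma> s \<bullet> vder \<gamma> s = s + a0"
proof -
  have "\<gamma> s \<bullet> vder \<gamma> s + vder \<gamma> s \<bullet> \<gamma> s = 2 * (s + a0)"
    using smooth_curve_on_has_vector_derivative[OF assms(2,3), of 0]
    by (intro inner_derivative_eq_on_open[OF _ _ _ assms(1,3)])
      (auto intro!: derivative_eq_intros simp: assms(4) simp flip: power2_norm_eq_inner)
  then show ?thesis
    by (simp add: inner_commute)
qed

lemma position_orthogonal_acceleration:
  assumes "open I" "smooth_curve_on I \<gamma>" "arclength_param I \<gamma>" "s \<in> I"
    and "\<And>s. s \<in> I \<Longrightarrow> \<gamma> s \<bullet> vder \<gamma> s = s + a0"
  shows "\<gamma> s \<bullet> vder (vder \<gamma>) s = 0"
proof -
  have "\<gamma> s \<bullet> vder (vder \<gamma>) s + vder \<gamma> s \<bullet> vder \<gamma> s = 1"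
    using smooth_curve_on_has_vector_derivative[OF assms(2,4), of 0]
      smooth_curve_on_has_vector_derivative[OF assms(2,4), of 1]
    by (intro inner_derivative_eq_on_open[OF _ _ _ assms(1,4) assms(5)])
      (auto intro!: derivative_eq_intros)
  then show ?thesis
    using assms(3,4) by (simp add: arclength_param_def norm_eq_1)
qed

lemma norm_cross3_position_velocity:
  assumes "open I" "smooth_curve_on I \<gamma>" "arclength_param I \<gamma>" "s \<in> I" "a1 \<ge> 0"
    and "\<And>s. s \<in> I \<Longrightarrow> norm (\<gamma> s) ^ 2 = (s + a0) ^ 2 + a1 ^ 2"
  shows "norm (cross3 (\<gamma> s) (vder \<gamma> s)) = a1"
proof -
  have "(norm (cross3 (\<gamma> s) (vder \<gamma> s)))\<^sup>2 = a1\<^sup>2"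
    using norm_cross_dot[of "\<gamma> s" "vder \<gamma> s"] position_inner_velocity[OF assms(1,2,4,6)]
      assms(3,4,6)
    by (simp add: arclength_param_def)
  then show ?thesis
    using assms(5) by (simp add: power2_eq_iff_nonneg)
qed

lemma acceleration_parallel_cross3_position_velocity:
  assumes "open I" "smooth_curve_on I \<gamma>" "arclength_param I \<gamma>" "s \<in> I" "a1 > 0"
    and "\<And>s. s \<in> I \<Longrightarrow> norm (\<gamma> s) ^ 2 = (s + a0) ^ 2 + a1 ^ 2"
  shows "vder (vder \<gamma>) s
           = (vder (vder \<gamma>) s \<bullet> cross3 (\<gamma> s) (vder \<gamma> s) / a1\<^sup>2) *\<^sub>R cross3 (\<gamma> s) (vder \<gamma> s)"
proof -
  have norm_cross: "norm (cross3 (\<gamma> s) (vder \<gamma> s)) = a1"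
    using norm_cross3_position_velocity[OF assms(1-4) _ assms(6)] assms(5) by simp
  then have "cross3 (\<gamma> s) (vder \<gamma> s) \<noteq> 0"
    using assms(5) by auto
  then show ?thesis
    using orthogonal_imp_parallel_cross3[of "vder (vder \<gamma>) s" "\<gamma> s" "vder \<gamma> s"] norm_cross
      position_orthogonal_acceleration[OF assms(1-4) position_inner_velocity[OF assms(1,2) _ assms(6)]]
      arclength_param_velocity_orthogonal_acceleration[OF assms(1-4)]
    by (simp add: inner_commute)
qed

theorem mainTheorem5:
  fixes \<gamma> :: "real \<Rightarrow> real^3" and I :: "real set" and \<kappa>0 a0 a1 :: real
  assumes "is_interval I" and "open I" and "I \<noteq> {}"
    and "smooth_curve_on I \<gamma>"
    and "arclength_param I \<gamma>"
    and "\<kappa>0 \<noteq> 0" and "\<forall>s\<in>I. curvature \<gamma> s = \<kappa>0"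
    and "a1 > 0" and "\<forall>s\<in>I. norm (\<gamma> s) ^ 2 = (s + a0) ^ 2 + a1 ^ 2"
  shows "\<exists>q::real. q \<noteq> 0 \<and>
           (\<forall>s\<in>I. vder (vder \<gamma>) s = q *\<^sub>R cross3 (\<gamma> s) (vder \<gamma> s))"
proof -
  note curve = assms(2,4,5) and radius = assms(9)[rule_format]
  have "continuous_on I (\<lambda>s. cross3 (\<gamma> s) (vder \<gamma> s))"
    using smooth_curve_on_continuous_on[OF assms(4), of 0] smooth_curve_on_continuous_on[OF assms(4), of 1]
    by (auto intro: continuous_on_cross)
  moreover have "continuous_on I (vder (vder \<gamma>))"
    using smooth_curve_on_continuous_on[OF assms(4), of 2] by (simp add: numeral_2_eq_2)
  moreover have "norm (vder (vder \<gamma>) s) = \<kappa>0" if "s \<in> I" for s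
    using arclength_param_curvature[OF curve that] assms(7) that by simp
  ultimately have "\<exists>q. \<bar>q\<bar> = \<kappa>0 / a1 \<and>
      (\<forall>s\<in>I. vder (vder \<gamma>) s = q *\<^sub>R cross3 (\<gamma> s) (vder \<gamma> s))"
    using norm_cross3_position_velocity[OF curve _ less_imp_le[OF assms(8)] radius]
      acceleration_parallel_cross3_position_velocity[OF curve _ assms(8) radius]
    by (intro continuous_parallel_constant_factor[OF is_interval_connected[OF assms(1)] assms(3)])
      (auto simp: assms(8))
  then obtain q where "\<bar>q\<bar> = \<kappa>0 / a1"
    and "\<forall>s\<in>I. vder (vder \<gamma>) s = q *\<^sub>R cross3 (\<gamma> s) (vder \<gamma> s)"
    by blast
  moreover have "q \<noteq> 0"
    using \<open>\<bar>q\<bar> = \<kappa>0 / a1\<close> assms(6,8) by auto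
  ultimately show ?thesis
    by blast
qed

end
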